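(* Let $h,k$ be integers with $hk(h+k)\neq0$. Then for every integer $n$ with $n(n+h)(n-k)\neq 0$, $$d(n)\,d(n+h)\,d(n-k)\ \le\ d(h)\,d(k)\,d(h+k)\,d\big(n(n+h)(n-k)\big).$$
   Context: For a nonzero integer $m$, $d(m)$ denotes the number of positive divisors of $m$ (so $d(m)=d(|m|)$). *)

theory Defs
  imports Main
begin

definition ndiv :: "int \<Rightarrow> nat" where
  "ndiv m = card {q :: int. q > 0 \<and> q dvd m}"

end

theory Submission
  imports Defs
begin

(* Write a = n, b = n + h, c = n - k.  Counting divisor pairs gives
   d(a) d(b) <= d(gcd a b) d(ab), and applying this twice together with
   gcd (ab) c | gcd a c * gcd b c and submultiplicativity of d yields
   d(a) d(b) d(c) <= d(gcd a b) d(gcd a c) d(gcd b c) d(abc).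
   Finally gcd a b | h, gcd a c | k and gcd b c | h + k. *)

definition pos_divisors :: "int \<Rightarrow> int set" where
  "pos_divisors m = {q. q > 0 \<and> q dvd m}"

lemma ndiv_eq_card_pos_divisors: "ndiv m = card (pos_divisors m)"
  by (simp add: ndiv_def pos_divisors_def)

lemma finite_pos_divisors: "m \<noteq> 0 \<Longrightarrow> finite (pos_divisors m)"
  by (rule finite_subset[of _ "{1..\<bar>m\<bar>}"]) (auto simp: pos_divisors_def dest: dvd_imp_le_int)

lemma ndiv_dvd_mono:
  assumes "m \<noteq> 0" "x dvd m"
  shows "ndiv x \<le> ndiv m"
  unfolding ndiv_eq_card_pos_divisors using assms
  by (intro card_mono finite_pos_divisors) (auto simp: pos_divisors_def intro: dvd_trans)

lemma ndiv_mult_le: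
  assumes "x \<noteq> 0" "y \<noteq> 0"
  shows "ndiv (x * y) \<le> ndiv x * ndiv y"
proof -
  let ?P = "pos_divisors x \<times> pos_divisors y"
  have "pos_divisors (x * y) \<subseteq> (\<lambda>(u, v). u * v) ` ?P"
  proof
    fix q assume "q \<in> pos_divisors (x * y)"
    hence q: "q > 0" "q dvd x * y" by (auto simp: pos_divisors_def)
    then obtain u v where uv: "q = u * v" "u dvd x" "v dvd y"
      using division_decomp by blast
    have "q = \<bar>u\<bar> * \<bar>v\<bar>" using q uv by (metis abs_mult abs_of_pos)
    moreover have "(\<bar>u\<bar>, \<bar>v\<bar>) \<in> ?P" using uv q by (auto simp: pos_divisors_def)
    ultimately show "q \<in> (\<lambda>(u, v). u * v) ` ?P" by force
  qed
  hence "card (pos_divisors (x * y)) \<le> card ((\<lambda>(u, v). u * v) ` ?P)"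
    using assms by (intro card_mono finite_imageI finite_cartesian_product finite_pos_divisors)
  also have "\<dots> \<le> card ?P" by (rule card_image_le) (use assms finite_pos_divisors in auto)
  finally show ?thesis by (simp add: ndiv_eq_card_pos_divisors card_cartesian_product)
qed

lemma gcd_mult_dvd_gcd_mult:
  fixes a b c :: "'a :: semiring_gcd"
  shows "gcd (a * b) c dvd gcd a c * gcd b c"
proof -
  obtain u v where uv: "gcd (a * b) c = u * v" "u dvd a" "v dvd b"
    using division_decomp[of "gcd (a * b) c" a b] by auto
  have "u * v dvd c" using uv(1) by (metis gcd_dvd2)
  hence "u dvd gcd a c" "v dvd gcd b c" using uv by (auto intro: dvd_mult_left dvd_mult_right)
  thus ?thesis using uv(1) by (simp add: mult_dvd_mono)
qed

lemma gcd_mult_divisor: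
  fixes u v b :: int
  assumes "v > 0" "v dvd b"
  shows "gcd (u * v) b = v * gcd u (b div v)"
proof -
  have "gcd (u * v) b = gcd (v * u) (v * (b div v))" using assms by (simp add: ac_simps)
  also have "\<dots> = v * gcd u (b div v)" using assms gcd_mult_distrib_int[of v u "b div v"] by simp
  finally show ?thesis .
qed

(* The injection (u, v) \<mapsto> (gcd u (b/v), uv) of divisor pairs: v is recovered
   from gcd (uv) b = v * gcd u (b/v). *)
lemma ndiv_mult_ndiv_le_gcd:
  assumes a: "a \<noteq> 0" and b: "b \<noteq> 0"
  shows "ndiv a * ndiv b \<le> ndiv (gcd a b) * ndiv (a * b)"
proof -
  let ?P = "pos_divisors a \<times> pos_divisors b"
  define f where "f = (\<lambda>(u :: int, v :: int). (gcd u (b div v), u * v))"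
  have "inj_on f ?P"
  proof (rule inj_onI)
    fix x y assume "x \<in> ?P" "y \<in> ?P" and eq: "f x = f y"
    moreover obtain u v u' v' where xy: "x = (u, v)" "y = (u', v')" by fastforce
    ultimately have pos: "u > 0" "v > 0" "v' > 0" "v dvd b" "v' dvd b"
      by (auto simp: pos_divisors_def)
    have g: "gcd u (b div v) = gcd u' (b div v')" and uv: "u * v = u' * v'"
      using eq xy by (auto simp: f_def)
    have "v * gcd u (b div v) = gcd (u * v) b"
      using gcd_mult_divisor[where u = u and v = v] pos by simp
    also have "\<dots> = v' * gcd u (b div v)"
      using gcd_mult_divisor[where u = u' and v = v'] pos uv g by simp
    finally have "v = v'" using pos(1) by simp
    thus "x = y" using xy uv pos by simp
  qed
  moreover have "f ` ?P \<subseteq> pos_divisors (gcd a b) \<times> pos_divisors (a * b)"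
  proof (rule image_subsetI)
    fix x assume "x \<in> ?P"
    moreover obtain u v where x: "x = (u, v)" by fastforce
    ultimately have pos: "u > 0" "v > 0" "u dvd a" "v dvd b" by (auto simp: pos_divisors_def)
    have "gcd u (b div v) dvd b" using pos by (metis dvd_div_mult_self dvd_mult2 gcd_dvd2)
    hence "gcd u (b div v) dvd gcd a b" using pos by (meson dvd_trans gcd_dvd1 gcd_greatest)
    moreover have "u * v dvd a * b" using pos by (simp add: mult_dvd_mono)
    ultimately show "f x \<in> pos_divisors (gcd a b) \<times> pos_divisors (a * b)"
      using pos x by (simp add: f_def pos_divisors_def)
  qed
  ultimately have "card ?P \<le> card (pos_divisors (gcd a b) \<times> pos_divisors (a * b))"
    using a b by (intro card_inj_on_le finite_cartesian_product finite_pos_divisors) auto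
  thus ?thesis by (simp add: ndiv_eq_card_pos_divisors card_cartesian_product)
qed

lemma ndiv_triple_le_gcds:
  assumes a: "a \<noteq> 0" and b: "b \<noteq> 0" and c: "c \<noteq> 0"
  shows "ndiv a * ndiv b * ndiv c
         \<le> ndiv (gcd a b) * ndiv (gcd a c) * ndiv (gcd b c) * ndiv (a * b * c)"
proof -
  have "ndiv a * ndiv b * ndiv c \<le> ndiv (gcd a b) * (ndiv (a * b) * ndiv c)"
    using ndiv_mult_ndiv_le_gcd[OF a b] by (simp add: mult.assoc)
  also have "\<dots> \<le> ndiv (gcd a b) * (ndiv (gcd (a * b) c) * ndiv (a * b * c))"
    using ndiv_mult_ndiv_le_gcd[of "a * b" c] a b c by simp
  also have "ndiv (gcd (a * b) c) \<le> ndiv (gcd a c * gcd b c)"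
    using a c by (intro ndiv_dvd_mono gcd_mult_dvd_gcd_mult) simp
  also have "\<dots> \<le> ndiv (gcd a c) * ndiv (gcd b c)"
    using a b by (intro ndiv_mult_le) simp_all
  finally show ?thesis by (simp add: ac_simps)
qed

theorem lemma2p5:
  fixes h k n :: int
  assumes "h * k * (h + k) \<noteq> 0"
    and "n * (n + h) * (n - k) \<noteq> 0"
  shows "ndiv n * ndiv (n + h) * ndiv (n - k)
         \<le> ndiv h * ndiv k * ndiv (h + k) * ndiv (n * (n + h) * (n - k))"
proof -
  have "gcd n (n + h) dvd h"
    using dvd_diff[OF gcd_dvd2 gcd_dvd1, of n "n + h"] by simp
  hence h: "ndiv (gcd n (n + h)) \<le> ndiv h"
    using assms(1) by (intro ndiv_dvd_mono) auto
  have "gcd n (n - k) dvd k"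
    using dvd_diff[OF gcd_dvd1 gcd_dvd2, of n "n - k"] by simp
  hence k: "ndiv (gcd n (n - k)) \<le> ndiv k"
    using assms(1) by (intro ndiv_dvd_mono) auto
  have "gcd (n + h) (n - k) dvd h + k"
    using dvd_diff[OF gcd_dvd1 gcd_dvd2, of "n + h" "n - k"] by (simp add: algebra_simps)
  hence hk: "ndiv (gcd (n + h) (n - k)) \<le> ndiv (h + k)"
    using assms(1) by (intro ndiv_dvd_mono) auto
  have "ndiv n * ndiv (n + h) * ndiv (n - k)
        \<le> ndiv (gcd n (n + h)) * ndiv (gcd n (n - k)) * ndiv (gcd (n + h) (n - k))
          * ndiv (n * (n + h) * (n - k))"
    using assms(2) by (intro ndiv_triple_le_gcds) auto
  also have "\<dots> \<le> ndiv h * ndiv k * ndiv (h + k) * ndiv (n * (n + h) * (n - k))"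
    using h k hk by (intro mult_le_mono) auto
  finally show ?thesis .
qed

end
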